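(* Let $n\ge1$. For every $\sigma\in\mathfrak{S}_{n+1}$, $\psi_{FV}(\sigma)=\psi_{YZL}(\Psi(\sigma))$.
   Context: For $\sigma\in\mathfrak{S}_{n+1}$ define $\psi_{FV}(\sigma)=(s_1\cdots s_n,(p_1,\dots,p_n))$ where, with convention $\sigma(0)=\sigma(n+2)=0$ and peaks/valleys/double ascents/double descents being values $\sigma(i)$ with $\sigma(i-1)<\sigma(i)>\sigma(i+1)$ / $\sigma(i-1)>\sigma(i)<\sigma(i+1)$ / $\sigma(i-1)<\sigma(i)<\sigma(i+1)$ / $\sigma(i-1)>\sigma(i)>\sigma(i+1)$: $s_i=\textsc{U}$ if the value $i$ is a valley, $\textsc{D}$ if a peak, $\textsc{L}_b$ if a double ascent, $\textsc{L}_r$ if a double descent; and $p_i=\#\{j: \sigma^{-1}(i)<j<n+1,\ \sigma(j)<i<\sigma(j+1)\}$. Define $\psi_{YZL}(\sigma)=(s_1\cdots s_n,(p_1,\dots,p_n))$ by $s_i=\textsc{U}$ if $i<\sigma(i)$ and $i+1\le\sigma^{-1}(i+1)$; $s_i=\textsc{D}$ if $i\ge\sigma(i)$ and $i+1>\sigma^{-1}(i+1)$; $s_i=\textsc{L}_b$ if $i<\sigma(i)$ and $i+1>\sigma^{-1}(i+1)$; $s_i=\textsc{L}_r$ if $i\ge\sigma(i)$ and $i+1\le\sigma^{-1}(i+1)$; and $p_i=\mathsf{nest}_i\sigma=\#\{j:j<i<\sigma(i)<\sigma(j)\text{ or }\sigma(j)<\sigma(i)\le i<j\}$. The map $\Phi:\mathfrak{S}_m\to\mathfrak{S}_m$: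 for $\rho\in\mathfrak{S}_m$, a letter $\rho(i)$ is a descent top if $i\le m-1$ and $\rho(i)>\rho(i+1)$, a descent bottom if $i\ge2$ and $\rho(i-1)>\rho(i)$; otherwise a nondescent top (resp. bottom). For $x=\rho(i)$ let $c(x)=\#\{j:i<j<m,\ \rho(j+1)<x<\rho(j)\}$. Let $f$ (resp. $g$) be the increasing word of descent bottoms (resp. nondescent bottoms); $f'$ the arrangement of descent tops in which each letter $x$ has exactly $c(x)$ larger letters to its left; $g'$ the arrangement of nondescent tops in which each letter $x$ has exactly $c(x)$ smaller letters to its right. With the two-row array of top row $fg$ and bottom row $f'g'$, $\Phi(\rho)=\tau$ where $\tau(b)=a$ for each column (top $a$, bottom $b$). The map $\Psi:\mathfrak{S}_m\to\mathfrak{S}_m$: $\hat\rho\in\mathfrak{S}_{m+1}$ is $\hat\rho(i)=\rho(i)+1$ ($i\le m$), $\hat\rho(m+1)=1$; $\tau=\Phi(\hat\rho)$ satisfies $\tau(1)=m+1$, and $\Psi(\rho)=\tau(2)\cdots\tau(m+1)$. Here $\Psi$ is applied with $m=n+1$. *)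

theory Defs
  imports "HOL-Combinatorics.Permutations"
begin

text \<open>Permutations of [m] = {1..m} are functions nat => nat with
  sigma permutes {1..m} (identity outside {1..m}).  Letters of the words.\<close>

datatype letter = U | D | Lb | Lr

type_synonym code = "letter list \<times> nat list"

definition ext0 :: "nat \<Rightarrow> (nat \<Rightarrow> nat) \<Rightarrow> nat \<Rightarrow> nat" where
  "ext0 n \<sigma> i = (if 1 \<le> i \<and> i \<le> n + 1 then \<sigma> i else 0)"

definition fv_letter :: "nat \<Rightarrow> (nat \<Rightarrow> nat) \<Rightarrow> nat \<Rightarrow> letter" where
  "fv_letter n \<sigma> i =
     (let k = inv \<sigma> i; a = ext0 n \<sigma> (k - 1); b = ext0 n \<sigma> (k + 1) in
      if a > i \<and> i < b then U
      else if a < i \<and> i > b then D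
      else if a < i \<and> i < b then Lb
      else Lr)"

definition fv_p :: "nat \<Rightarrow> (nat \<Rightarrow> nat) \<Rightarrow> nat \<Rightarrow> nat" where
  "fv_p n \<sigma> i = card {j. inv \<sigma> i < j \<and> j < n + 1 \<and> \<sigma> j < i \<and> i < \<sigma> (j + 1)}"

definition psiFV :: "nat \<Rightarrow> (nat \<Rightarrow> nat) \<Rightarrow> code" where
  "psiFV n \<sigma> = (map (fv_letter n \<sigma>) [1..<n+1], map (fv_p n \<sigma>) [1..<n+1])"

definition yzl_letter :: "(nat \<Rightarrow> nat) \<Rightarrow> nat \<Rightarrow> letter" where
  "yzl_letter \<sigma> i =
     (if i < \<sigma> i \<and> i + 1 \<le> inv \<sigma> (i + 1) then U
      else if i \<ge> \<sigma> i \<and> i + 1 > inv \<sigma> (i + 1) then D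
      else if i < \<sigma> i \<and> i + 1 > inv \<sigma> (i + 1) then Lb
      else Lr)"

definition nest :: "nat \<Rightarrow> (nat \<Rightarrow> nat) \<Rightarrow> nat \<Rightarrow> nat" where
  "nest n \<sigma> i = card {j \<in> {1..n+1}.
      (j < i \<and> i < \<sigma> i \<and> \<sigma> i < \<sigma> j) \<or> (\<sigma> j < \<sigma> i \<and> \<sigma> i \<le> i \<and> i < j)}"

definition psiYZL :: "nat \<Rightarrow> (nat \<Rightarrow> nat) \<Rightarrow> code" where
  "psiYZL n \<sigma> = (map (yzl_letter \<sigma>) [1..<n+1], map (nest n \<sigma>) [1..<n+1])"

definition desc_tops :: "nat \<Rightarrow> (nat \<Rightarrow> nat) \<Rightarrow> nat set" where
  "desc_tops m \<rho> = {\<rho> i | i. 1 \<le> i \<and> i \<le> m - 1 \<and> \<rho> i > \<rho> (i + 1)}"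

definition nondesc_tops :: "nat \<Rightarrow> (nat \<Rightarrow> nat) \<Rightarrow> nat set" where
  "nondesc_tops m \<rho> = {1..m} - desc_tops m \<rho>"

definition desc_bots :: "nat \<Rightarrow> (nat \<Rightarrow> nat) \<Rightarrow> nat set" where
  "desc_bots m \<rho> = {\<rho> i | i. 2 \<le> i \<and> i \<le> m \<and> \<rho> (i - 1) > \<rho> i}"

definition nondesc_bots :: "nat \<Rightarrow> (nat \<Rightarrow> nat) \<Rightarrow> nat set" where
  "nondesc_bots m \<rho> = {1..m} - desc_bots m \<rho>"

definition cstat :: "nat \<Rightarrow> (nat \<Rightarrow> nat) \<Rightarrow> nat \<Rightarrow> nat" where
  "cstat m \<rho> x = card {j. inv \<rho> x < j \<and> j < m \<and> \<rho> (j + 1) < x \<and> x < \<rho> j}"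

definition fword :: "nat \<Rightarrow> (nat \<Rightarrow> nat) \<Rightarrow> nat list" where
  "fword m \<rho> = sorted_list_of_set (desc_bots m \<rho>)"

definition gword :: "nat \<Rightarrow> (nat \<Rightarrow> nat) \<Rightarrow> nat list" where
  "gword m \<rho> = sorted_list_of_set (nondesc_bots m \<rho>)"

definition fword' :: "nat \<Rightarrow> (nat \<Rightarrow> nat) \<Rightarrow> nat list" where
  "fword' m \<rho> = (THE w. distinct w \<and> set w = desc_tops m \<rho> \<and>
      (\<forall>k < length w. card {l. l < k \<and> w ! l > w ! k} = cstat m \<rho> (w ! k)))"

definition gword' :: "nat \<Rightarrow> (nat \<Rightarrow> nat) \<Rightarrow> nat list" where
  "gword' m \<rho> = (THE w. distinct w \<and> set w = nondesc_tops m \<rho> \<and>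
      (\<forall>k < length w. card {l. k < l \<and> l < length w \<and> w ! l < w ! k} = cstat m \<rho> (w ! k)))"

text \<open>Phi(rho) = tau with tau(b) = a for each column (top a, bottom b) of the
  two-row array with top row fg and bottom row f'g'; identity outside [m].\<close>
definition Phi :: "nat \<Rightarrow> (nat \<Rightarrow> nat) \<Rightarrow> nat \<Rightarrow> nat" where
  "Phi m \<rho> b = (if b \<in> {1..m} then
      (case map_of (zip (fword' m \<rho> @ gword' m \<rho>) (fword m \<rho> @ gword m \<rho>)) b of
         Some a \<Rightarrow> a | None \<Rightarrow> b)
     else b)"

definition rho_hat :: "nat \<Rightarrow> (nat \<Rightarrow> nat) \<Rightarrow> nat \<Rightarrow> nat" where
  "rho_hat m \<rho> i = (if 1 \<le> i \<and> i \<le> m then \<rho> i + 1 else if i = m + 1 then 1 else i)"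

definition Psi :: "nat \<Rightarrow> (nat \<Rightarrow> nat) \<Rightarrow> nat \<Rightarrow> nat" where
  "Psi m \<rho> i = (if 1 \<le> i \<and> i \<le> m then Phi (m + 1) (rho_hat m \<rho>) (i + 1) else i)"

end

theory Submission
  imports Defs
begin

text \<open>Let \<open>\<rho>\<close> be \<open>\<sigma>\<close> with all values raised by one and the letter \<open>1\<close> appended, so that
  \<open>\<Psi>(\<sigma>)(i) = \<Phi>(\<rho>)(i + 1)\<close>. The words \<open>f'\<close> and \<open>g'\<close> are well defined because a
  sequence of prescribed inversion counts determines a unique arrangement of a finite set.
  Counting descents below a level shows that \<open>\<Phi>(\<rho>)\<close> maps every descent top \<open>x\<close> to a
  descent bottom below \<open>x\<close> and every nondescent top \<open>x\<close> to a nondescent bottom at least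
  \<open>x\<close>, and that the nestings of \<open>\<Phi>(\<rho>)\<close> at \<open>x\<close> are counted by \<open>c(x)\<close>. As \<open>\<rho>\<close> ends
  with \<open>1\<close>, the descents of \<open>\<rho>\<close> crossing level \<open>x\<close> to the right of \<open>x\<close> outnumber the
  ascents crossing it exactly when \<open>x\<close> is a nondescent top, and these ascents are what
  \<open>p\<^sub>i\<close> of \<open>\<psi>\<^sub>F\<^sub>V\<close> counts. Finally the value \<open>i\<close> is a peak, valley or double
  ascent/descent of \<open>\<sigma>\<close> according to whether \<open>i + 1\<close> is a descent top and/or bottom of
  \<open>\<rho>\<close>, which \<open>\<Phi>\<close> turns into the excedance data read by \<open>\<psi>\<^sub>Y\<^sub>Z\<^sub>L\<close>.\<close>

lemma takeWhile_neq_append_Cons: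
  "m \<notin> set u \<Longrightarrow> takeWhile (\<lambda>y. y \<noteq> m) (u @ m # v) = u"
  by (induction u) auto

lemma set_take_Cons_drop: "set (take n xs @ x # drop n xs) = insert x (set xs)"
proof -
  have "set xs = set (take n xs) \<union> set (drop n xs)"
    by (metis append_take_drop_id set_append)
  then show ?thesis
    by auto
qed

lemma takeWhile_neq_nth:
  assumes "distinct w" "k < length w"
  shows "takeWhile (\<lambda>y. y \<noteq> w ! k) w = take k w"
proof -
  have w: "w = take k w @ w ! k # drop (Suc k) w"
    using assms(2) by (rule id_take_nth_drop)
  with assms(1) have "w ! k \<notin> set (take k w)"
    by (metis distinct_append not_distinct_conv_prefix)
  then show ?thesis
    by (subst w) (rule takeWhile_neq_append_Cons)
qed

lemma takeWhile_neq_removeAll: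
  "x \<noteq> m \<Longrightarrow> takeWhile (\<lambda>y. y \<noteq> x) (removeAll m w) = removeAll m (takeWhile (\<lambda>y. y \<noteq> x) w)"
proof (induction w)
  case (Cons a w)
  then show ?case by (cases "a = m"; cases "a = x") simp_all
qed simp

lemma length_filter_take:
  assumes "k \<le> length w"
  shows "length (filter P (take k w)) = card {l. l < k \<and> P (w ! l)}"
proof -
  have "{l. l < length (take k w) \<and> P (take k w ! l)} = {l. l < k \<and> P (w ! l)}"
    using assms by auto
  then show ?thesis
    by (simp add: length_filter_conv_card)
qed

lemma eq_if_removeAll_eq:
  assumes "distinct w1" "distinct w2" "m \<in> set w1" "m \<in> set w2"
    and "removeAll m w1 = removeAll m w2"
    and "length (takeWhile (\<lambda>y. y \<noteq> m) w1) = length (takeWhile (\<lambda>y. y \<noteq> m) w2)"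
  shows "w1 = w2"
proof -
  obtain u1 v1 u2 v2 where w: "w1 = u1 @ m # v1" "w2 = u2 @ m # v2"
    using assms(3,4) split_list by metis
  with assms(1,2) have m: "m \<notin> set u1" "m \<notin> set v1" "m \<notin> set u2" "m \<notin> set v2"
    by auto
  with w assms(5,6) have "u1 @ v1 = u2 @ v2" "length u1 = length u2"
    by (simp_all add: takeWhile_neq_append_Cons)
  with w show ?thesis by simp
qed

context linorder
begin

definition larger_before :: "'a list \<Rightarrow> 'a \<Rightarrow> nat" where
  "larger_before w x = length (filter (\<lambda>y. x < y) (takeWhile (\<lambda>y. y \<noteq> x) w))"

definition larger_before_counts :: "('a \<Rightarrow> nat) \<Rightarrow> 'a list \<Rightarrow> bool" where
  "larger_before_counts c w \<longleftrightarrow> distinct w \<and> (\<forall>x\<in>set w. larger_before w x = c x)"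

lemma larger_before_nth:
  assumes "distinct w" "k < length w"
  shows "larger_before w (w ! k) = card {l. l < k \<and> w ! k < w ! l}"
  using assms by (simp add: larger_before_def takeWhile_neq_nth length_filter_take)

lemma larger_before_counts_iff_nth:
  "larger_before_counts c w \<longleftrightarrow>
     distinct w \<and> (\<forall>k < length w. card {l. l < k \<and> w ! k < w ! l} = c (w ! k))"
  by (metis (no_types, lifting) larger_before_counts_def larger_before_nth in_set_conv_nth)

lemma larger_before_removeAll:
  assumes "m < x"
  shows "larger_before (removeAll m w) x = larger_before w x"
proof -
  have "filter (\<lambda>y. x < y) (removeAll m u) = filter (\<lambda>y. x < y) u" for u
    using assms by (induction u) auto
  with assms show ?thesis
    by (simp add: larger_before_def takeWhile_neq_removeAll)
qed

lemma larger_before_least: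
  assumes "\<forall>y\<in>set w. m \<le> y"
  shows "larger_before w m = length (takeWhile (\<lambda>y. y \<noteq> m) w)"
proof -
  have "\<forall>y\<in>set (takeWhile (\<lambda>y. y \<noteq> m) w). m < y"
    using assms by (auto dest!: set_takeWhileD simp: less_le)
  then show ?thesis
    by (simp add: larger_before_def filter_id_conv)
qed

text \<open>The least letter is counted by every other letter and counts none of them, so it can be
  removed without changing the other counts; its own count is its position.\<close>

lemma larger_before_counts_iff_removeAll_Min:
  assumes "distinct w" "w \<noteq> []"
  defines "m \<equiv> Min (set w)"
  shows "larger_before_counts c w \<longleftrightarrow>
           larger_before_counts c (removeAll m w) \<and> length (takeWhile (\<lambda>y. y \<noteq> m) w) = c m"
proof -
  have m: "m \<in> set w" "\<forall>y\<in>set w. m \<le> y"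
    using assms(2) by (simp_all add: m_def)
  have "larger_before (removeAll m w) x = larger_before w x" if "x \<in> set (removeAll m w)" for x
    using that m(2) by (intro larger_before_removeAll) (auto simp: order.strict_iff_order)
  then show ?thesis
    using assms(1) m by (auto simp: larger_before_counts_def distinct_removeAll larger_before_least)
qed

lemma larger_before_counts_insert_least:
  assumes "larger_before_counts c w" "\<forall>y\<in>set w. m < y" "c m \<le> length w"
  shows "larger_before_counts c (take (c m) w @ m # drop (c m) w)" (is "larger_before_counts c ?v")
proof -
  have m: "m \<notin> set (take (c m) w)" "m \<notin> set (drop (c m) w)"
    using assms(2) by (auto dest: in_set_takeD in_set_dropD)
  have "Min (set ?v) = m"
    using assms(2) unfolding set_take_Cons_drop by (auto intro: Min_eqI less_imp_le)
  moreover have "distinct ?v"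
    using assms(1) m by (simp add: larger_before_counts_def set_take_disj_set_drop_if_distinct)
  ultimately show ?thesis
    using larger_before_counts_iff_removeAll_Min[of ?v c] assms(1,3) m
    by (simp add: takeWhile_neq_append_Cons)
qed

lemma larger_before_counts_unique:
  assumes "larger_before_counts c v" "larger_before_counts c w" "set v = set w"
  shows "v = w"
  using assms
proof (induction "length v" arbitrary: v w)
  case 0
  then show ?case
    by simp
next
  case (Suc n)
  define m where "m = Min (set v)"
  have v: "distinct v" "v \<noteq> []" and w: "distinct w" "w \<noteq> []"
    using Suc.hyps(2) Suc.prems by (auto simp: larger_before_counts_def)
  have m: "m \<in> set v" "m \<in> set w"
    using w(2) Suc.prems(3) by (simp_all add: m_def)
  have "Min (set w) = m"
    using Suc.prems(3) by (simp add: m_def)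
  then have "larger_before_counts c (removeAll m v)" "length (takeWhile (\<lambda>y. y \<noteq> m) v) = c m"
    "larger_before_counts c (removeAll m w)" "length (takeWhile (\<lambda>y. y \<noteq> m) w) = c m"
    using larger_before_counts_iff_removeAll_Min[of v c]
      larger_before_counts_iff_removeAll_Min[of w c]
      Suc.prems(1,2) v w by (simp_all add: m_def)
  moreover have "n = length (removeAll m v)"
    using Suc.hyps(2) v m by (simp add: distinct_remove1_removeAll[symmetric] length_remove1)
  ultimately have "removeAll m v = removeAll m w"
    using Suc.hyps(1) Suc.prems(3) by simp
  then show ?case
    using eq_if_removeAll_eq[of v w m] v w m
      \<open>length (takeWhile (\<lambda>y. y \<noteq> m) v) = c m\<close> \<open>length (takeWhile (\<lambda>y. y \<noteq> m) w) = c m\<close>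
    by simp
qed

lemma larger_before_counts_exists:
  assumes "finite S" "\<forall>x\<in>S. c x \<le> card {y\<in>S. x < y}"
  shows "\<exists>w. set w = S \<and> larger_before_counts c w"
  using assms
proof (induction "card S" arbitrary: S)
  case 0
  then show ?case
    by (auto simp: larger_before_counts_def)
next
  case (Suc n)
  define m where "m = Min S"
  have "S \<noteq> {}"
    using Suc.hyps(2) by auto
  with Suc.prems(1) have m: "m \<in> S" "\<forall>y\<in>S - {m}. m < y"
    by (auto simp: m_def less_le)
  have "{y\<in>S - {m}. x < y} = {y\<in>S. x < y}" if "x \<in> S - {m}" for x
    using that m(2) by (auto dest: order.strict_trans)
  then have "\<forall>x\<in>S - {m}. c x \<le> card {y\<in>S - {m}. x < y}"
    using Suc.prems(2) by simp
  moreover have "n = card (S - {m})"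
    using Suc.hyps(2) Suc.prems(1) m(1) by simp
  ultimately obtain w where w: "set w = S - {m}" "larger_before_counts c w"
    using Suc.hyps(1) Suc.prems(1) by blast
  have "{y\<in>S. m < y} = S - {m}"
    using m(2) by auto
  then have "c m \<le> card (S - {m})"
    using bspec[OF Suc.prems(2) m(1)] by simp
  also have "card (S - {m}) = length w"
    using w distinct_card[of w] by (simp add: larger_before_counts_def)
  finally have "larger_before_counts c (take (c m) w @ m # drop (c m) w)"
    using w m(2) by (intro larger_before_counts_insert_least) auto
  moreover have "set (take (c m) w @ m # drop (c m) w) = S"
    using w m(1) unfolding set_take_Cons_drop by auto
  ultimately show ?case
    by blast
qed

theorem ex1_larger_before_counts:
  assumes "finite S" "\<forall>x\<in>S. c x \<le> card {y\<in>S. x < y}"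
  shows "\<exists>!w. set w = S \<and> larger_before_counts c w"
  using larger_before_counts_exists[OF assms] larger_before_counts_unique by blast

lemma ex1_arrangement_larger_left:
  assumes "finite S" "\<forall>x\<in>S. c x \<le> card {y\<in>S. x < y}"
  shows "\<exists>!w. distinct w \<and> set w = S \<and> (\<forall>k < length w. card {l. l < k \<and> w ! k < w ! l} = c (w ! k))"
  using ex1_larger_before_counts[OF assms]
  by (simp add: larger_before_counts_iff_nth conj_left_commute)

end

lemma card_after_eq_card_before_rev:
  assumes "k < length w"
  shows "card {l. k < l \<and> l < length w \<and> P (w ! l)}
       = card {l. l < length w - Suc k \<and> P (rev w ! l)}"
proof -
  have "{l. k < l \<and> l < length w \<and> P (w ! l)}
        = (\<lambda>l. length w - Suc l) ` {l. l < length w - Suc k \<and> P (rev w ! l)}"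
  proof (intro set_eqI iffI)
    fix l assume "l \<in> {l. k < l \<and> l < length w \<and> P (w ! l)}"
    then show "l \<in> (\<lambda>l. length w - Suc l) ` {l. l < length w - Suc k \<and> P (rev w ! l)}"
      by (intro image_eqI[of _ _ "length w - Suc l"]) (auto simp: rev_nth)
  qed (auto simp: rev_nth)
  moreover have "inj_on (\<lambda>l. length w - Suc l) {l. l < length w - Suc k \<and> P (rev w ! l)}"
    by (rule inj_onI) auto
  ultimately show ?thesis
    by (simp add: card_image)
qed

lemma all_less_reflect: "(\<forall>k<n. Q k) \<longleftrightarrow> (\<forall>k<n. Q (n - Suc k))"
proof
  assume "\<forall>k<n. Q (n - Suc k)"
  moreover have "n - Suc (n - Suc k) = k" if "k < n" for k
    using that by simp
  ultimately show "\<forall>k<n. Q k"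
    by (metis diff_Suc_less gr_implies_not0 neq0_conv)
qed simp

text \<open>The dual order turns larger letters into smaller ones, and reversal turns left into right.\<close>

lemma ex1_arrangement_smaller_right:
  fixes S :: "'a::linorder set"
  assumes "finite S" "\<forall>x\<in>S. c x \<le> card {y\<in>S. y < x}"
  shows "\<exists>!w. distinct w \<and> set w = S \<and>
           (\<forall>k < length w. card {l. k < l \<and> l < length w \<and> w ! l < w ! k} = c (w ! k))"
proof -
  let ?left = "\<lambda>w. distinct w \<and> set w = S \<and>
    (\<forall>k < length w. card {l. l < k \<and> w ! l < w ! k} = c (w ! k))"
  have "\<exists>!w. ?left w"
    using assms by (rule linorder.ex1_arrangement_larger_left[OF dual_linorder])
  then obtain w0 where w0: "?left w0" and unique: "\<And>w. ?left w \<Longrightarrow> w = w0"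
    by (elim ex1E) blast
  have "\<exists>!w. ?left (rev w)"
  proof (rule ex1I[of _ "rev w0"])
    show "?left (rev (rev w0))"
      using w0 by simp
    show "w = rev w0" if "?left (rev w)" for w
      using unique[OF that] by (metis rev_rev_ident)
  qed
  moreover have "?left (rev w) \<longleftrightarrow> distinct w \<and> set w = S \<and>
           (\<forall>k < length w. card {l. k < l \<and> l < length w \<and> w ! l < w ! k} = c (w ! k))" for w
  proof -
    have "card {l. l < length w - Suc k \<and> rev w ! l < w ! k}
        = card {l. k < l \<and> l < length w \<and> w ! l < w ! k}" if "k < length w" for k
      using card_after_eq_card_before_rev[OF that, of "\<lambda>y. y < w ! k"] by simp
    then have "(\<forall>k < length w. card {l. l < k \<and> rev w ! l < rev w ! k} = c (rev w ! k)) \<longleftrightarrow>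
          (\<forall>k < length w. card {l. k < l \<and> l < length w \<and> w ! l < w ! k} = c (w ! k))"
      by (subst all_less_reflect) (simp add: rev_nth)
    then show ?thesis
      by simp
  qed
  ultimately show ?thesis
    by simp
qed

lemma sorted_wrt_less_nth_less_iff:
  fixes xs :: "'a::linorder list"
  assumes "sorted_wrt (<) xs" "i < length xs" "j < length xs"
  shows "xs ! i < xs ! j \<longleftrightarrow> i < j"
  using assms by (metis not_less_iff_gr_or_eq sorted_wrt_nth_less)

lemma card_less_sorted_nth:
  fixes xs :: "'a::linorder list"
  assumes "sorted_wrt (<) xs" "k < length xs"
  shows "card {y \<in> set xs. y < xs ! k} = k"
proof -
  have "{y \<in> set xs. y < xs ! k} = (!) xs ` {..<k}"
    using assms by (auto simp: in_set_conv_nth sorted_wrt_less_nth_less_iff)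
      (use less_trans in blast)
  moreover have "inj_on ((!) xs) {..<k}"
    using assms by (intro inj_on_nth) (auto simp: strict_sorted_iff)
  ultimately show ?thesis
    by (simp add: card_image)
qed

lemma card_less_split: "card {l. l < k \<and> P l} + card {l. l < k \<and> \<not> P l} = (k::nat)"
proof -
  have "{l. l < k \<and> P l} \<union> {l. l < k \<and> \<not> P l} = {..<k}"
    by auto
  then show ?thesis
    by (subst card_Un_disjoint[symmetric]) auto
qed

lemma card_filter_Diff_add_card_filter:
  assumes "finite A" "S \<subseteq> A"
  shows "card {y\<in>A - S. P y} + card {y\<in>S. P y} = card {y\<in>A. P y}"
proof -
  have "{y\<in>A - S. P y} \<union> {y\<in>S. P y} = {y\<in>A. P y}"
    using assms(2) by auto
  moreover have "finite {y\<in>S. P y}"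
    using assms by (auto intro: finite_subset)
  ultimately show ?thesis
    using assms(1) by (subst card_Un_disjoint[symmetric]) auto
qed

lemma card_Suc_shift: "card {j\<in>{1..m}. P (Suc j)} = card {j\<in>{2..m+1}. P j}"
proof -
  have "{j\<in>{2..m+1}. P j} = Suc ` {j\<in>{1..m}. P (Suc j)}"
  proof (intro set_eqI iffI)
    fix j assume "j \<in> {j\<in>{2..m+1}. P j}"
    then show "j \<in> Suc ` {j\<in>{1..m}. P (Suc j)}"
      by (intro image_eqI[of _ _ "j - 1"]) auto
  qed auto
  then show ?thesis
    by (simp add: card_image)
qed

locale perm_interval =
  fixes M :: nat and \<rho> :: "nat \<Rightarrow> nat"
  assumes perm: "\<rho> permutes {1..M}"
begin

abbreviation "T \<equiv> desc_tops M \<rho>"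
abbreviation "B \<equiv> desc_bots M \<rho>"
abbreviation "NT \<equiv> nondesc_tops M \<rho>"
abbreviation "NB \<equiv> nondesc_bots M \<rho>"
abbreviation "c \<equiv> cstat M \<rho>"
abbreviation "\<tau> \<equiv> Phi M \<rho>"

lemma in_interval: "i \<in> {1..M} \<Longrightarrow> \<rho> i \<in> {1..M}"
  using perm by (rule permutes_in_image[THEN iffD2])

lemma inv_in_interval: "x \<in> {1..M} \<Longrightarrow> inv \<rho> x \<in> {1..M}"
  using permutes_inv[OF perm] by (rule permutes_in_image[THEN iffD2])

lemma apply_inv [simp]: "\<rho> (inv \<rho> x) = x" and inv_apply [simp]: "inv \<rho> (\<rho> x) = x"
  using perm by (simp_all add: permutes_inverses)

lemma eq_iff_inv: "\<rho> i = x \<longleftrightarrow> i = inv \<rho> x"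
  by auto

definition descents :: "nat set" where
  "descents = {j. 1 \<le> j \<and> j < M \<and> \<rho> (j + 1) < \<rho> j}"

lemma finite_descents: "finite descents"
  unfolding descents_def by (rule finite_subset[of _ "{..<M}"]) auto

lemma desc_tops_eq_image: "T = \<rho> ` descents"
  unfolding desc_tops_def descents_def by force

lemma desc_bots_eq_image: "B = (\<lambda>j. \<rho> (j + 1)) ` descents"
proof (intro set_eqI iffI)
  fix x assume "x \<in> B"
  then obtain i where "x = \<rho> i" "2 \<le> i" "i \<le> M" "\<rho> i < \<rho> (i - 1)"
    unfolding desc_bots_def by blast
  then show "x \<in> (\<lambda>j. \<rho> (j + 1)) ` descents"
    unfolding descents_def by (intro image_eqI[of _ _ "i - 1"]) auto
next
  fix x assume "x \<in> (\<lambda>j. \<rho> (j + 1)) ` descents"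
  then show "x \<in> B"
    unfolding desc_bots_def descents_def by force
qed

lemma desc_top_iff: "x \<in> T \<longleftrightarrow> x \<in> {1..M} \<and> inv \<rho> x < M \<and> \<rho> (inv \<rho> x + 1) < x"
proof
  assume "x \<in> T"
  then obtain j where "j \<in> descents" "x = \<rho> j"
    by (auto simp: desc_tops_eq_image)
  then show "x \<in> {1..M} \<and> inv \<rho> x < M \<and> \<rho> (inv \<rho> x + 1) < x"
    using in_interval[of j] by (simp add: descents_def)
next
  assume "x \<in> {1..M} \<and> inv \<rho> x < M \<and> \<rho> (inv \<rho> x + 1) < x"
  then have "inv \<rho> x \<in> descents"
    using inv_in_interval[of x] by (simp add: descents_def)
  then show "x \<in> T"
    unfolding desc_tops_eq_image by (rule image_eqI[rotated]) simp
qed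

lemma desc_bot_iff: "x \<in> B \<longleftrightarrow> x \<in> {1..M} \<and> 2 \<le> inv \<rho> x \<and> x < \<rho> (inv \<rho> x - 1)"
proof
  assume "x \<in> B"
  then obtain j where "j \<in> descents" "x = \<rho> (j + 1)"
    by (auto simp: desc_bots_eq_image)
  then show "x \<in> {1..M} \<and> 2 \<le> inv \<rho> x \<and> x < \<rho> (inv \<rho> x - 1)"
    using in_interval[of "j + 1"] by (simp add: descents_def)
next
  assume x: "x \<in> {1..M} \<and> 2 \<le> inv \<rho> x \<and> x < \<rho> (inv \<rho> x - 1)"
  then have "inv \<rho> x - 1 \<in> descents" "\<rho> (inv \<rho> x - 1 + 1) = x"
    using inv_in_interval[of x] by (auto simp: descents_def)
  then show "x \<in> B"
    unfolding desc_bots_eq_image by (metis image_eqI)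
qed

lemma card_desc_tops_eq_card_desc_bots: "card T = card B"
proof -
  have "inj_on \<rho> descents" "inj_on (\<lambda>j. \<rho> (j + 1)) descents"
    using permutes_inj[OF perm] by (auto simp: inj_on_def dest: injD)
  then show ?thesis
    by (simp add: desc_tops_eq_image desc_bots_eq_image card_image)
qed

lemma desc_tops_subset: "T \<subseteq> {1..M}"
  by (auto simp: desc_top_iff)

lemma desc_bots_subset: "B \<subseteq> {1..M}"
  by (auto simp: desc_bot_iff)

lemma finite_desc_tops: "finite T"
  by (rule finite_subset[OF desc_tops_subset]) simp

lemma finite_desc_bots: "finite B"
  by (rule finite_subset[OF desc_bots_subset]) simp

text \<open>The descents whose top lies below \<open>x\<close>, the descents to the right of \<open>x\<close> that cross
  the level \<open>x\<close>, and the descent starting at \<open>x\<close> are disjoint, and all their bottoms lie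
  below \<open>x\<close>.\<close>

lemma card_desc_tops_less_add_cstat_le:
  assumes x: "x \<in> {1..M}"
  shows "card {t\<in>T. t < x} + c x + (if x \<in> T then 1 else 0) \<le> card {b\<in>B. b < x}"
proof -
  define A where "A = {j\<in>descents. \<rho> j < x}"
  define C where "C = {j. inv \<rho> x < j \<and> j < M \<and> \<rho> (j + 1) < x \<and> x < \<rho> j}"
  define E where "E = {j\<in>descents. \<rho> j = x}"
  have inj: "inj_on \<rho> A" "inj_on (\<lambda>j. \<rho> (j + 1)) {j\<in>descents. \<rho> (j + 1) < x}"
    using permutes_inj[OF perm] by (auto simp: inj_on_def dest: injD)
  have "{t\<in>T. t < x} = \<rho> ` A"
    unfolding desc_tops_eq_image A_def by auto
  then have card_A: "card {t\<in>T. t < x} = card A"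
    using inj(1) by (simp add: card_image)
  have "{b\<in>B. b < x} = (\<lambda>j. \<rho> (j + 1)) ` {j\<in>descents. \<rho> (j + 1) < x}"
    unfolding desc_bots_eq_image by auto
  then have card_bots: "card {b\<in>B. b < x} = card {j\<in>descents. \<rho> (j + 1) < x}"
    using inj(2) by (simp add: card_image)
  have "E = (if x \<in> T then {inv \<rho> x} else {})"
    unfolding E_def desc_tops_eq_image by (auto simp: eq_iff_inv) (metis apply_inv imageI)
  then have card_E: "card E = (if x \<in> T then 1 else 0)"
    by simp
  have "1 \<le> inv \<rho> x"
    using inv_in_interval[OF x] by simp
  then have sub: "A \<union> C \<union> E \<subseteq> {j\<in>descents. \<rho> (j + 1) < x}"
    unfolding A_def C_def E_def descents_def by auto
  have fin: "finite A" "finite C" "finite E"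
    unfolding A_def C_def E_def using finite_descents by (auto intro: finite_subset[of _ "{..<M}"])
  have "card A + card C + card E = card (A \<union> C \<union> E)"
    using fin by (subst card_Un_disjoint; auto simp: A_def C_def E_def card_Un_disjoint)+
  also have "\<dots> \<le> card {j\<in>descents. \<rho> (j + 1) < x}"
    using sub finite_descents by (intro card_mono) auto
  finally show ?thesis
    using card_A card_bots card_E by (simp add: C_def cstat_def)
qed

lemma cstat_le_card_desc_tops_greater:
  assumes "x \<in> {1..M}"
  shows "c x \<le> card {y\<in>T. x < y}"
proof -
  define C where "C = {j. inv \<rho> x < j \<and> j < M \<and> \<rho> (j + 1) < x \<and> x < \<rho> j}"
  have "1 \<le> inv \<rho> x"
    using inv_in_interval[OF assms] by simp
  then have "\<rho> ` C \<subseteq> {y\<in>T. x < y}"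
    unfolding C_def desc_tops_eq_image descents_def by auto
  then have "card C \<le> card {y\<in>T. x < y}"
    using finite_desc_tops permutes_inj[OF perm]
    by (intro card_inj_on_le[of \<rho>]) (auto simp: inj_on_def dest: injD)
  then show ?thesis
    by (simp add: C_def cstat_def)
qed

lemma cstat_le_card_nondesc_tops_less:
  assumes "x \<in> NT"
  shows "c x \<le> card {y\<in>NT. y < x}"
proof -
  have x: "x \<in> {1..M}" "x \<notin> T"
    using assms by (auto simp: nondesc_tops_def)
  have "card {b\<in>B. b < x} \<le> card {y\<in>{1..M}. y < x}"
    using desc_bots_subset by (intro card_mono) auto
  then show ?thesis
    using card_desc_tops_less_add_cstat_le[OF x(1)] x(2)
      card_filter_Diff_add_card_filter[OF _ desc_tops_subset, of "\<lambda>y. y < x"]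
    by (simp add: nondesc_tops_def)
qed

abbreviation "F \<equiv> fword M \<rho>"
abbreviation "G \<equiv> gword M \<rho>"
abbreviation "F' \<equiv> fword' M \<rho>"
abbreviation "G' \<equiv> gword' M \<rho>"

lemma fword'_spec:
  "distinct F' \<and> set F' = T \<and> (\<forall>k < length F'. card {l. l < k \<and> F' ! l > F' ! k} = c (F' ! k))"
proof -
  have "\<forall>x\<in>T. c x \<le> card {y\<in>T. x < y}"
    using cstat_le_card_desc_tops_greater desc_tops_subset by blast
  then show ?thesis
    unfolding fword'_def by (rule theI'[OF ex1_arrangement_larger_left[OF finite_desc_tops]])
qed

lemma gword'_spec:
  "distinct G' \<and> set G' = NT \<and>
     (\<forall>k < length G'. card {l. k < l \<and> l < length G' \<and> G' ! l < G' ! k} = c (G' ! k))"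
proof -
  have "finite NT"
    by (simp add: nondesc_tops_def)
  moreover have "\<forall>x\<in>NT. c x \<le> card {y\<in>NT. y < x}"
    using cstat_le_card_nondesc_tops_less by blast
  ultimately show ?thesis
    unfolding gword'_def by (rule theI'[OF ex1_arrangement_smaller_right])
qed

lemma fword_spec: "sorted_wrt (<) F" "distinct F" "set F = B"
  using finite_desc_bots by (simp_all add: fword_def)

lemma gword_spec: "sorted_wrt (<) G" "distinct G" "set G = NB"
  by (simp_all add: gword_def nondesc_bots_def)

lemma length_fword: "length F = length F'"
  using fword_spec fword'_spec card_desc_tops_eq_card_desc_bots by (metis distinct_card)

lemma length_gword: "length G = length G'"
proof -
  have "length G = M - card B"
    using gword_spec desc_bots_subset finite_desc_bots
    by (metis distinct_card card_Diff_subset card_atLeastAtMost diff_Suc_1 nondesc_bots_def)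
  also have "\<dots> = length G'"
    using gword'_spec desc_tops_subset finite_desc_tops card_desc_tops_eq_card_desc_bots
    by (metis distinct_card card_Diff_subset card_atLeastAtMost diff_Suc_1 nondesc_tops_def)
  finally show ?thesis .
qed

lemma Phi_keys: "distinct (F' @ G')" "set (F' @ G') = {1..M}"
  using fword'_spec gword'_spec desc_tops_subset by (auto simp: nondesc_tops_def)

lemma Phi_values: "distinct (F @ G)" "set (F @ G) = {1..M}"
  using fword_spec gword_spec desc_bots_subset by (auto simp: nondesc_bots_def)

lemma Phi_nth:
  assumes "i < length (F' @ G')"
  shows "\<tau> ((F' @ G') ! i) = (F @ G) ! i"
proof -
  have "(F' @ G') ! i \<in> {1..M}"
    using assms nth_mem Phi_keys(2) by blast
  then show ?thesis
    using assms map_of_zip_nth[OF _ Phi_keys(1), of "F @ G" i] length_fword length_gword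
    by (simp add: Phi_def)
qed

lemma Phi_fword'_nth: "k < length F' \<Longrightarrow> \<tau> (F' ! k) = F ! k"
  using Phi_nth[of k] length_fword by (simp add: nth_append)

lemma Phi_gword'_nth: "k < length G' \<Longrightarrow> \<tau> (G' ! k) = G ! k"
  using Phi_nth[of "length F' + k"] length_fword by (simp add: nth_append)

lemma fword'_position_le:
  assumes k: "k < length F'"
  shows "k \<le> c (F' ! k) + card {t\<in>T. t < F' ! k}"
proof -
  have "card {l. l < k \<and> \<not> F' ! l > F' ! k} \<le> card {t\<in>T. t < F' ! k}"
  proof (rule card_inj_on_le)
    show "(!) F' ` {l. l < k \<and> \<not> F' ! l > F' ! k} \<subseteq> {t\<in>T. t < F' ! k}"
    proof
      fix y assume "y \<in> (!) F' ` {l. l < k \<and> \<not> F' ! l > F' ! k}"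
      then obtain l where l: "l < k" "\<not> F' ! l > F' ! k" "y = F' ! l"
        by blast
      have "F' ! l \<noteq> F' ! k"
        using l(1) k fword'_spec by (simp add: nth_eq_iff_index_eq)
      moreover have "F' ! l \<in> T"
        using l(1) k fword'_spec nth_mem by (metis order.strict_trans)
      ultimately show "y \<in> {t\<in>T. t < F' ! k}"
        using l(2,3) by simp
    qed
    show "inj_on ((!) F') {l. l < k \<and> \<not> F' ! l > F' ! k}"
      using k fword'_spec by (intro inj_on_nth) auto
  qed (use finite_desc_tops in simp)
  moreover have "card {l. l < k \<and> F' ! l > F' ! k} = c (F' ! k)"
    using fword'_spec k by blast
  ultimately show ?thesis
    using card_less_split[of k "\<lambda>l. F' ! l > F' ! k"] by linarith
qed

lemma gword'_card_less_le:
  assumes k: "k < length G'"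
  shows "card {y\<in>NT. y < G' ! k} \<le> k + c (G' ! k)"
proof -
  let ?x = "G' ! k"
  have "{y\<in>NT. y < ?x} = (!) G' ` {l. l < length G' \<and> G' ! l < ?x}"
    unfolding gword'_spec[THEN conjunct2, THEN conjunct1, symmetric] by (auto simp: in_set_conv_nth)
  then have "card {y\<in>NT. y < ?x} = card {l. l < length G' \<and> G' ! l < ?x}"
    using gword'_spec by (simp add: card_image inj_on_nth)
  also have "{l. l < length G' \<and> G' ! l < ?x}
      = {l. l < k \<and> G' ! l < ?x} \<union> {l. k < l \<and> l < length G' \<and> G' ! l < ?x}"
    using k by auto (metis less_irrefl linorder_neqE_nat)
  also have "card \<dots> \<le> card {l. l < k \<and> G' ! l < ?x} + card {l. k < l \<and> l < length G' \<and> G' ! l < ?x}"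
    by (rule card_Un_le)
  also have "card {l. k < l \<and> l < length G' \<and> G' ! l < ?x} = c ?x"
    using gword'_spec k by blast
  also have "card {l. l < k \<and> G' ! l < ?x} \<le> k"
    using card_mono[of "{..<k}" "{l. l < k \<and> G' ! l < ?x}"] by auto
  finally show ?thesis
    by simp
qed

lemma Phi_desc_top:
  assumes x: "x \<in> T"
  shows "\<tau> x < x" "\<tau> x \<in> B"
proof -
  obtain k where k: "k < length F'" "F' ! k = x"
    using x fword'_spec by (metis in_set_conv_nth)
  have kF: "k < length F"
    using k length_fword by simp
  have \<tau>x: "\<tau> x = F ! k"
    using Phi_fword'_nth k by metis
  then show "\<tau> x \<in> B"
    using kF fword_spec nth_mem by metis
  show "\<tau> x < x"
  proof (rule ccontr)
    assume "\<not> \<tau> x < x"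
    then have "{b\<in>B. b < x} \<subseteq> {y \<in> set F. y < F ! k}"
      using fword_spec \<tau>x by auto
    then have "card {b\<in>B. b < x} \<le> k"
      using card_mono[of "{y \<in> set F. y < F ! k}"] card_less_sorted_nth[OF fword_spec(1) kF] by simp
    then show False
      using fword'_position_le[OF k(1)] card_desc_tops_less_add_cstat_le x desc_tops_subset k(2)
      by fastforce
  qed
qed

lemma Phi_nondesc_top:
  assumes x: "x \<in> NT"
  shows "x \<le> \<tau> x" "\<tau> x \<in> NB"
proof -
  obtain k where k: "k < length G'" "G' ! k = x"
    using x gword'_spec by (metis in_set_conv_nth)
  have kG: "k < length G"
    using k length_gword by simp
  have \<tau>x: "\<tau> x = G ! k"
    using Phi_gword'_nth k by metis
  then show "\<tau> x \<in> NB"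
    using kG gword_spec nth_mem by metis
  have x': "x \<in> {1..M}" "x \<notin> T"
    using x by (simp_all add: nondesc_tops_def)
  show "x \<le> \<tau> x"
  proof (rule ccontr)
    assume "\<not> x \<le> \<tau> x"
    then have "G ! k < x"
      using \<tau>x by simp
    then have "insert (G ! k) {y \<in> set G. y < G ! k} \<subseteq> {b\<in>NB. b < x}"
      using nth_mem[OF kG] unfolding gword_spec(3) by auto
    then have "card (insert (G ! k) {y \<in> set G. y < G ! k}) \<le> card {b\<in>NB. b < x}"
      by (intro card_mono) (simp_all add: nondesc_bots_def)
    then have "Suc k \<le> card {b\<in>NB. b < x}"
      using card_less_sorted_nth[OF gword_spec(1) kG] by simp
    then show False
      using gword'_card_less_le[OF k(1)] k(2) card_desc_tops_less_add_cstat_le[OF x'(1)] x'(2)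
        card_filter_Diff_add_card_filter[OF _ desc_tops_subset, of "\<lambda>y. y < x"]
        card_filter_Diff_add_card_filter[OF _ desc_bots_subset, of "\<lambda>y. y < x"]
      by (simp add: nondesc_tops_def nondesc_bots_def)
  qed
qed

lemma Phi_less_iff_desc_top: "j \<in> {1..M} \<Longrightarrow> \<tau> j < j \<longleftrightarrow> j \<in> T"
  using Phi_desc_top(1) Phi_nondesc_top(1) by (force simp: nondesc_tops_def)

lemma Phi_permutes: "\<tau> permutes {1..M}"
proof (rule bij_imp_permutes)
  have len: "length (F' @ G') = length (F @ G)"
    using length_fword length_gword by simp
  have "inj_on \<tau> {1..M}"
  proof (rule inj_onI)
    fix x y assume "x \<in> {1..M}" "y \<in> {1..M}" "\<tau> x = \<tau> y"
    then have "x \<in> set (F' @ G')" "y \<in> set (F' @ G')"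
      using Phi_keys(2) by simp_all
    then obtain i j where "i < length (F' @ G')" "x = (F' @ G') ! i"
      "j < length (F' @ G')" "y = (F' @ G') ! j"
      unfolding in_set_conv_nth by blast
    with \<open>\<tau> x = \<tau> y\<close> show "x = y"
      using Phi_nth Phi_values(1) len by (simp add: nth_eq_iff_index_eq)
  qed
  moreover have "\<tau> ` {1..M} \<subseteq> {1..M}"
  proof
    fix y assume "y \<in> \<tau> ` {1..M}"
    then obtain x where "x \<in> set (F' @ G')" "y = \<tau> x"
      using Phi_keys(2) by auto
    then obtain i where "i < length (F' @ G')" "y = \<tau> ((F' @ G') ! i)"
      unfolding in_set_conv_nth by blast
    then have "i < length (F @ G)" "y = (F @ G) ! i"
      using Phi_nth len by simp_all
    then show "y \<in> {1..M}"
      unfolding Phi_values(2)[symmetric] by (simp only: nth_mem)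
  qed
  ultimately show "bij_betw \<tau> {1..M} {1..M}"
    by (simp add: bij_betw_def endo_inj_surj)
qed (auto simp: Phi_def)

lemma nest_desc_top_eq_image:
  assumes k: "k < length F'"
  shows "{j\<in>{1..M}. \<tau> j < \<tau> (F' ! k) \<and> F' ! k < j} = (!) F' ` {l. l < k \<and> F' ! l > F' ! k}"
proof (intro set_eqI iffI)
  fix j assume j: "j \<in> {j\<in>{1..M}. \<tau> j < \<tau> (F' ! k) \<and> F' ! k < j}"
  have "F' ! k \<in> T"
    using k fword'_spec nth_mem by blast
  then have "j \<in> T"
    using j Phi_less_iff_desc_top[of j] Phi_desc_top(1) by force
  then obtain l where l: "l < length F'" "F' ! l = j"
    using fword'_spec by (metis in_set_conv_nth)
  have "F ! l < F ! k"
    using j Phi_fword'_nth[OF k] Phi_fword'_nth[OF l(1)] l(2) by simp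
  then have "l < k"
    using sorted_wrt_less_nth_less_iff[OF fword_spec(1)] l k length_fword by simp
  then show "j \<in> (!) F' ` {l. l < k \<and> F' ! l > F' ! k}"
    using l j by auto
next
  fix j assume "j \<in> (!) F' ` {l. l < k \<and> F' ! l > F' ! k}"
  then obtain l where l: "l < k" "F' ! l > F' ! k" "j = F' ! l"
    by blast
  have "l < length F'"
    using l(1) k by simp
  then have "j \<in> T" and \<tau>j: "\<tau> j = F ! l"
    using fword'_spec Phi_fword'_nth l(3) nth_mem by auto
  then have "j \<in> {1..M}"
    using desc_tops_subset by blast
  moreover have "F ! l < F ! k"
    using sorted_wrt_less_nth_less_iff[OF fword_spec(1)] l(1) k length_fword by simp
  ultimately show "j \<in> {j\<in>{1..M}. \<tau> j < \<tau> (F' ! k) \<and> F' ! k < j}"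
    using \<tau>j Phi_fword'_nth[OF k] l by simp
qed

lemma nest_nondesc_top_eq_image:
  assumes k: "k < length G'"
  shows "{j\<in>{1..M}. j < G' ! k \<and> \<tau> (G' ! k) < \<tau> j}
       = (!) G' ` {l. k < l \<and> l < length G' \<and> G' ! l < G' ! k}"
proof (intro set_eqI iffI)
  fix j assume j: "j \<in> {j\<in>{1..M}. j < G' ! k \<and> \<tau> (G' ! k) < \<tau> j}"
  have "G' ! k \<in> NT"
    using k gword'_spec nth_mem by blast
  then have "\<not> \<tau> j < j"
    using j Phi_nondesc_top(1) by fastforce
  then have "j \<in> NT"
    using j Phi_less_iff_desc_top[of j] by (simp add: nondesc_tops_def)
  then obtain l where l: "l < length G'" "G' ! l = j"
    using gword'_spec by (metis in_set_conv_nth)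
  have "G ! k < G ! l"
    using j Phi_gword'_nth[OF k] Phi_gword'_nth[OF l(1)] l(2) by simp
  then have "k < l"
    using sorted_wrt_less_nth_less_iff[OF gword_spec(1)] l k length_gword by simp
  then show "j \<in> (!) G' ` {l. k < l \<and> l < length G' \<and> G' ! l < G' ! k}"
    using l j by auto
next
  fix j assume "j \<in> (!) G' ` {l. k < l \<and> l < length G' \<and> G' ! l < G' ! k}"
  then obtain l where l: "k < l" "l < length G'" "G' ! l < G' ! k" "j = G' ! l"
    by blast
  then have "j \<in> {1..M}" "\<tau> j = G ! l"
    using gword'_spec Phi_gword'_nth nth_mem by (auto simp: nondesc_tops_def)
  moreover have "G ! k < G ! l"
    using sorted_wrt_less_nth_less_iff[OF gword_spec(1)] l(1,2) k length_gword by simp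
  ultimately show "j \<in> {j\<in>{1..M}. j < G' ! k \<and> \<tau> (G' ! k) < \<tau> j}"
    using Phi_gword'_nth[OF k] l by simp
qed

lemma card_nest_desc_top:
  assumes "x \<in> T"
  shows "card {j\<in>{1..M}. \<tau> j < \<tau> x \<and> x < j} = c x"
proof -
  obtain k where k: "k < length F'" "x = F' ! k"
    using assms fword'_spec by (metis in_set_conv_nth)
  have "inj_on ((!) F') {l. l < k \<and> F' ! l > F' ! k}"
    using fword'_spec k by (intro inj_on_nth) auto
  then show ?thesis
    using nest_desc_top_eq_image[OF k(1)] fword'_spec k by (simp add: card_image)
qed

lemma card_nest_nondesc_top:
  assumes "x \<in> NT"
  shows "card {j\<in>{1..M}. j < x \<and> \<tau> x < \<tau> j} = c x"
proof -
  obtain k where k: "k < length G'" "x = G' ! k"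
    using assms gword'_spec by (metis in_set_conv_nth)
  have "inj_on ((!) G') {l. k < l \<and> l < length G' \<and> G' ! l < G' ! k}"
    using gword'_spec by (intro inj_on_nth) auto
  then show ?thesis
    using nest_nondesc_top_eq_image[OF k(1)] gword'_spec k by (simp add: card_image)
qed

end

lemma card_interval_split_first:
  fixes a :: nat
  assumes "a < M"
  shows "card {j. a \<le> j \<and> j < M \<and> P j} = (if P a then 1 else 0) + card {j. Suc a \<le> j \<and> j < M \<and> P j}"
proof -
  have "{j. a \<le> j \<and> j < M \<and> P j} = (if P a then {a} else {}) \<union> {j. Suc a \<le> j \<and> j < M \<and> P j}"
    using assms by (auto simp: le_eq_less_or_eq Suc_le_eq)
  moreover have "finite {j. Suc a \<le> j \<and> j < M \<and> P j}"
    by (rule finite_subset[of _ "{..<M}"]) auto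
  ultimately show ?thesis
    by (simp add: card_Un_disjoint)
qed

lemma card_down_crossings_eq:
  fixes \<rho> :: "nat \<Rightarrow> nat"
  assumes "a \<le> M" "\<forall>j\<in>{a..M}. \<rho> j \<noteq> x" "\<rho> M < x"
  shows "card {j. a \<le> j \<and> j < M \<and> \<rho> (j + 1) < x \<and> x < \<rho> j}
       = card {j. a \<le> j \<and> j < M \<and> \<rho> j < x \<and> x < \<rho> (j + 1)} + (if x < \<rho> a then 1 else 0)"
  using assms
proof (induction "M - a" arbitrary: a)
  case 0
  then have "{j. a \<le> j \<and> j < M \<and> P j} = {}" for P
    by auto
  with 0 show ?case
    by (simp only:) simp
next
  case (Suc d)
  then have "a < M" "\<rho> a \<noteq> x" "\<rho> (Suc a) \<noteq> x"
    by auto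
  moreover have "card {j. Suc a \<le> j \<and> j < M \<and> \<rho> (j + 1) < x \<and> x < \<rho> j}
       = card {j. Suc a \<le> j \<and> j < M \<and> \<rho> j < x \<and> x < \<rho> (j + 1)} + (if x < \<rho> (Suc a) then 1 else 0)"
    using Suc by simp
  ultimately show ?case
    by (simp add: card_interval_split_first[of a M] neq_iff) linarith
qed

locale perm_interval_ending_one = perm_interval +
  assumes last: "\<rho> M = 1"
begin

lemma inv_less:
  assumes "x \<in> {2..M}"
  shows "inv \<rho> x < M"
proof -
  have "inv \<rho> x \<noteq> M"
    using assms last apply_inv[of x] by force
  moreover have "inv \<rho> x \<le> M"
    using inv_in_interval[of x] assms by simp
  ultimately show ?thesis
    by simp
qed

lemma cstat_eq_fv_p:
  assumes "x \<in> {2..M}"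
  shows "c x = fv_p (M - 1) \<rho> x + (if x \<in> T then 0 else 1)"
proof -
  have "inv \<rho> x < M"
    using assms by (rule inv_less)
  have "\<forall>j\<in>{Suc (inv \<rho> x)..M}. \<rho> j \<noteq> x"
    by (auto simp: eq_iff_inv)
  then have "c x = fv_p (M - 1) \<rho> x + (if x < \<rho> (Suc (inv \<rho> x)) then 1 else 0)"
    using card_down_crossings_eq[of "Suc (inv \<rho> x)" M \<rho> x] \<open>inv \<rho> x < M\<close> assms last
    by (simp add: cstat_def fv_p_def Suc_le_eq)
  moreover have "\<rho> (Suc (inv \<rho> x)) \<noteq> x"
    by (simp add: eq_iff_inv)
  ultimately show ?thesis
    using assms \<open>inv \<rho> x < M\<close> by (auto simp: desc_top_iff)
qed

text \<open>No value lies above \<open>M\<close>, so the preimage \<open>y\<close> of \<open>M\<close> has \<open>c(y) = 0\<close>; this forces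
  \<open>y = 1\<close>, since every other nondescent top has \<open>c > 0\<close>.\<close>

lemma Phi_one: "\<tau> 1 = M"
proof -
  define y where "y = inv \<tau> M"
  have "M \<in> {1..M}"
    using last permutes_not_in[OF perm, of M] by fastforce
  then have y: "y \<in> {1..M}" "\<tau> y = M"
    unfolding y_def using permutes_in_image[OF permutes_inv[OF Phi_permutes]] Phi_permutes
    by (simp_all add: permutes_inverses)
  have "y \<notin> T"
    using y Phi_desc_top(1) by fastforce
  then have "y \<in> NT"
    using y(1) by (simp add: nondesc_tops_def)
  have "\<tau> j \<le> M" if "j \<in> {1..M}" for j
    using that Phi_permutes permutes_in_image by fastforce
  then have "{j\<in>{1..M}. j < y \<and> \<tau> y < \<tau> j} = {}"
    using y(2) by (auto simp: not_less)
  then have "c y = 0"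
    using card_nest_nondesc_top[OF \<open>y \<in> NT\<close>] by (metis card.empty)
  then have "y = 1"
    using cstat_eq_fv_p[of y] y(1) \<open>y \<notin> T\<close> by fastforce
  then show ?thesis
    using y(2) by simp
qed

lemma Phi_less_last: "x \<in> {2..M} \<Longrightarrow> \<tau> x < M"
  using Phi_one permutes_in_image[OF Phi_permutes, of x]
    injD[OF permutes_inj[OF Phi_permutes], of x 1]
  by fastforce

end

lemma rho_hat_permutes:
  assumes "\<sigma> permutes {1..m}"
  shows "rho_hat m \<sigma> permutes {1..m+1}"
proof (rule bij_imp_permutes)
  have \<sigma>: "\<sigma> i \<in> {1..m}" if "i \<in> {1..m}" for i
    using that permutes_in_image[OF assms] by simp
  have "inj_on (rho_hat m \<sigma>) {1..m+1}"
  proof (rule inj_onI)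
    fix i j assume "i \<in> {1..m+1}" "j \<in> {1..m+1}" "rho_hat m \<sigma> i = rho_hat m \<sigma> j"
    then show "i = j"
      using \<sigma>[of i] \<sigma>[of j] permutes_inj[OF assms]
      by (auto simp: rho_hat_def split: if_splits dest: injD)
  qed
  moreover have "rho_hat m \<sigma> ` {1..m+1} \<subseteq> {1..m+1}"
    using \<sigma> by (auto simp: rho_hat_def)
  ultimately show "bij_betw (rho_hat m \<sigma>) {1..m+1} {1..m+1}"
    by (simp add: bij_betw_def endo_inj_surj)
qed (auto simp: rho_hat_def)

locale Psi_perm =
  fixes n :: nat and \<sigma> :: "nat \<Rightarrow> nat"
  assumes perm: "\<sigma> permutes {1..n+1}"
begin

abbreviation "\<rho>h \<equiv> rho_hat (n + 1) \<sigma>"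
abbreviation "\<pi> \<equiv> Psi (n + 1) \<sigma>"

sublocale hat: perm_interval_ending_one "n + 2" \<rho>h
  using rho_hat_permutes[OF perm] by unfold_locales (simp_all add: rho_hat_def)

lemma rho_hat_eq_ext0: "j \<in> {1..n+2} \<Longrightarrow> \<rho>h j = ext0 n \<sigma> j + 1"
  by (auto simp: rho_hat_def ext0_def)

lemma inv_rho_hat: "i \<in> {1..n+1} \<Longrightarrow> inv \<rho>h (i + 1) = inv \<sigma> i"
  using permutes_inv_eq[OF rho_hat_permutes[OF perm]] permutes_inverses(1)[OF perm]
    permutes_in_image[OF permutes_inv[OF perm]]
  by (simp add: rho_hat_def)

lemma ext0_neq: "i \<in> {1..n+1} \<Longrightarrow> j \<noteq> inv \<sigma> i \<Longrightarrow> ext0 n \<sigma> j \<noteq> i"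
  using permutes_inverses(2)[OF perm] by (auto simp: ext0_def)

lemma Psi_eq: "i \<in> {1..n+1} \<Longrightarrow> \<pi> i = hat.\<tau> (i + 1)"
  by (simp add: Psi_def)

lemma Psi_permutes: "\<pi> permutes {1..n+1}"
proof (rule bij_imp_permutes)
  have "inj_on \<pi> {1..n+1}"
    using Psi_eq permutes_inj[OF hat.Phi_permutes] by (auto simp: inj_on_def dest: injD)
  moreover have "\<pi> ` {1..n+1} \<subseteq> {1..n+1}"
  proof
    fix y assume "y \<in> \<pi> ` {1..n+1}"
    then obtain i where i: "i \<in> {1..n+1}" "y = hat.\<tau> (i + 1)"
      using Psi_eq by auto
    then have "1 \<le> y" "y < n + 2"
      using permutes_in_image[OF hat.Phi_permutes, of "i + 1"] hat.Phi_less_last[of "i + 1"] by auto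
    then show "y \<in> {1..n+1}"
      by simp
  qed
  ultimately show "bij_betw \<pi> {1..n+1} {1..n+1}"
    by (simp add: bij_betw_def endo_inj_surj)
qed (auto simp: Psi_def)

lemma inv_Psi: "y \<in> {1..n+1} \<Longrightarrow> inv \<pi> y = inv hat.\<tau> y - 1"
proof -
  assume y: "y \<in> {1..n+1}"
  define b where "b = inv hat.\<tau> y"
  have "b \<in> {1..n+2}" "hat.\<tau> b = y"
    using y permutes_in_image[OF permutes_inv[OF hat.Phi_permutes]] hat.Phi_permutes
    by (auto simp: b_def permutes_inverses)
  moreover have "b \<noteq> 1"
    using y \<open>hat.\<tau> b = y\<close> hat.Phi_one by auto
  ultimately have "b - 1 \<in> {1..n+1}" "b - 1 + 1 = b"
    by auto
  then have "\<pi> (b - 1) = y"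
    using Psi_eq[of "b - 1"] \<open>hat.\<tau> b = y\<close> by simp
  then show ?thesis
    using permutes_inv_eq[OF Psi_permutes] by (simp add: b_def)
qed

lemma less_Psi_iff: "i \<in> {1..n} \<Longrightarrow> i < \<pi> i \<longleftrightarrow> i + 1 \<notin> hat.T"
  using hat.Phi_less_iff_desc_top[of "i + 1"] Psi_eq[of i] by auto

lemma le_inv_Psi_iff: "i \<in> {1..n} \<Longrightarrow> i + 1 \<le> inv \<pi> (i + 1) \<longleftrightarrow> i + 1 \<in> hat.B"
proof -
  assume i: "i \<in> {1..n}"
  define b where "b = inv hat.\<tau> (i + 1)"
  have b: "b \<in> {1..n+2}" "hat.\<tau> b = i + 1"
    using i permutes_in_image[OF permutes_inv[OF hat.Phi_permutes]] hat.Phi_permutes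
    by (auto simp: b_def permutes_inverses)
  have "inv \<pi> (i + 1) = b - 1"
    using i inv_Psi by (simp add: b_def)
  moreover have "b \<in> hat.T \<or> b \<in> hat.NT"
    using b(1) by (auto simp: nondesc_tops_def)
  ultimately show ?thesis
    using hat.Phi_desc_top[of b] hat.Phi_nondesc_top[of b] b(2)
    by (auto simp: nondesc_bots_def)
qed

lemma inv_in_interval: "i \<in> {1..n+1} \<Longrightarrow> inv \<sigma> i \<in> {1..n+1}"
  using permutes_in_image[OF permutes_inv[OF perm]] by simp

lemma desc_top_rho_hat_iff:
  assumes "i \<in> {1..n}"
  shows "i + 1 \<in> hat.T \<longleftrightarrow> ext0 n \<sigma> (inv \<sigma> i + 1) < i"
proof -
  have k: "inv \<sigma> i \<in> {1..n+1}" "inv \<rho>h (i + 1) = inv \<sigma> i"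
    using assms inv_in_interval inv_rho_hat by simp_all
  then have "i + 1 \<in> hat.T \<longleftrightarrow> \<rho>h (inv \<sigma> i + 1) < i + 1"
    unfolding hat.desc_top_iff using assms by auto
  also have "\<dots> \<longleftrightarrow> ext0 n \<sigma> (inv \<sigma> i + 1) < i"
    using rho_hat_eq_ext0[of "inv \<sigma> i + 1"] k by simp
  finally show ?thesis .
qed

lemma desc_bot_rho_hat_iff:
  assumes "i \<in> {1..n}"
  shows "i + 1 \<in> hat.B \<longleftrightarrow> i < ext0 n \<sigma> (inv \<sigma> i - 1)"
proof -
  have k: "inv \<sigma> i \<in> {1..n+1}" "inv \<rho>h (i + 1) = inv \<sigma> i"
    using assms inv_in_interval inv_rho_hat by simp_all
  then have "i + 1 \<in> hat.B \<longleftrightarrow> 2 \<le> inv \<sigma> i \<and> i + 1 < \<rho>h (inv \<sigma> i - 1)"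
    unfolding hat.desc_bot_iff using assms by auto
  also have "\<dots> \<longleftrightarrow> i < ext0 n \<sigma> (inv \<sigma> i - 1)"
    using rho_hat_eq_ext0[of "inv \<sigma> i - 1"] k by (cases "inv \<sigma> i = 1") (auto simp: ext0_def)
  finally show ?thesis .
qed

lemma fv_letter_eq_yzl_letter:
  assumes i: "i \<in> {1..n}"
  shows "fv_letter n \<sigma> i = yzl_letter \<pi> i"
proof -
  define a where "a = ext0 n \<sigma> (inv \<sigma> i - 1)"
  define b where "b = ext0 n \<sigma> (inv \<sigma> i + 1)"
  have "1 \<le> inv \<sigma> i"
    using inv_in_interval[of i] i by simp
  then have "a \<noteq> i" "b \<noteq> i"
    using ext0_neq[of i] i by (auto simp: a_def b_def)
  moreover have "i < \<pi> i \<longleftrightarrow> \<not> b < i"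
    using less_Psi_iff[OF i] desc_top_rho_hat_iff[OF i] by (simp add: b_def)
  moreover have "i + 1 \<le> inv \<pi> (i + 1) \<longleftrightarrow> i < a"
    using le_inv_Psi_iff[OF i] desc_bot_rho_hat_iff[OF i] by (simp add: a_def)
  ultimately show ?thesis
    unfolding fv_letter_def yzl_letter_def Let_def a_def[symmetric] b_def[symmetric]
    by (auto simp: not_less)
qed

lemma fv_p_rho_hat: "i \<in> {1..n} \<Longrightarrow> fv_p n \<sigma> i = fv_p (n + 1) \<rho>h (i + 1)"
proof -
  assume i: "i \<in> {1..n}"
  have k: "1 \<le> inv \<sigma> i" "inv \<rho>h (i + 1) = inv \<sigma> i"
    using i inv_in_interval[of i] inv_rho_hat[of i] by simp_all
  have "{j. inv \<sigma> i < j \<and> j < n + 1 + 1 \<and> \<rho>h j < i + 1 \<and> i + 1 < \<rho>h (j + 1)}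
      = {j. inv \<sigma> i < j \<and> j < n + 1 \<and> \<sigma> j < i \<and> i < \<sigma> (j + 1)}"
    using k(1) by (auto simp: rho_hat_def less_Suc_eq)
  then show ?thesis
    by (simp only: fv_p_def k(2))
qed

lemma nest_Psi_eq_card:
  assumes "i \<in> {1..n}"
  defines "x \<equiv> i + 1"
  shows "nest n \<pi> i = card {j\<in>{2..n+2}.
           (j < x \<and> x \<le> hat.\<tau> x \<and> hat.\<tau> x < hat.\<tau> j) \<or> (hat.\<tau> j < hat.\<tau> x \<and> hat.\<tau> x < x \<and> x < j)}"
    (is "_ = card {j\<in>_. ?Q j}")
proof -
  have "{j\<in>{1..n+1}. (j < i \<and> i < \<pi> i \<and> \<pi> i < \<pi> j) \<or> (\<pi> j < \<pi> i \<and> \<pi> i \<le> i \<and> i < j)}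
      = {j\<in>{1..n+1}. ?Q (Suc j)}"
    using assms Psi_eq by auto
  then show ?thesis
    using card_Suc_shift[of "n + 1" ?Q] by (simp add: nest_def)
qed

lemma nest_Psi: "i \<in> {1..n} \<Longrightarrow> nest n \<pi> i = fv_p (n + 1) \<rho>h (i + 1)"
proof -
  assume i: "i \<in> {1..n}"
  define x where "x = i + 1"
  have x: "x \<in> {2..n+2}"
    using i by (simp add: x_def)
  show ?thesis
  proof (cases "x \<in> hat.T")
    case True
    then have "hat.\<tau> x < x"
      by (rule hat.Phi_desc_top(1))
    then have "nest n \<pi> i = card {j\<in>{1..n+2}. hat.\<tau> j < hat.\<tau> x \<and> x < j}"
      unfolding nest_Psi_eq_card[OF i, folded x_def] using x
      by (intro arg_cong[where f = card]) auto
    then show ?thesis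
      using hat.card_nest_desc_top[OF True] hat.cstat_eq_fv_p[OF x] True by (simp add: x_def)
  next
    case False
    then have "x \<in> hat.NT"
      using x by (simp add: nondesc_tops_def)
    then have "x \<le> hat.\<tau> x"
      by (rule hat.Phi_nondesc_top(1))
    then have "nest n \<pi> i = card ({j\<in>{1..n+2}. j < x \<and> hat.\<tau> x < hat.\<tau> j} - {1})"
      unfolding nest_Psi_eq_card[OF i, folded x_def] by (intro arg_cong[where f = card]) auto
    moreover have "1 \<in> {j\<in>{1..n+2}. j < x \<and> hat.\<tau> x < hat.\<tau> j}"
      using x hat.Phi_one hat.Phi_less_last[OF x] by auto
    ultimately show ?thesis
      using hat.card_nest_nondesc_top[OF \<open>x \<in> hat.NT\<close>] hat.cstat_eq_fv_p[OF x] False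
      by (simp add: x_def)
  qed
qed

end

theorem theorem2p5:
  fixes n :: nat and \<sigma> :: "nat \<Rightarrow> nat"
  assumes "n \<ge> 1" and "\<sigma> permutes {1..n+1}"
  shows "psiFV n \<sigma> = psiYZL n (Psi (n + 1) \<sigma>)"
proof -
  interpret Psi_perm n \<sigma>
    using assms(2) by unfold_locales
  have "map (fv_letter n \<sigma>) [1..<n+1] = map (yzl_letter (Psi (n + 1) \<sigma>)) [1..<n+1]"
    using fv_letter_eq_yzl_letter by (intro map_cong) auto
  moreover have "map (fv_p n \<sigma>) [1..<n+1] = map (nest n (Psi (n + 1) \<sigma>)) [1..<n+1]"
    using fv_p_rho_hat nest_Psi by (intro map_cong) auto
  ultimately show ?thesis
    by (simp add: psiFV_def psiYZL_def)
qed

end
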